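(* Let $n\ge1$, $t>0$. For $\lambda>0$ and $(\mathbf z,\mathbf w,\zeta)\in\mathbb{C}^n\times\mathbb{C}^n\times\mathbb{C}$, $\zeta=\xi+i\eta$, put $$I_\lambda(\mathbf z,\mathbf w,\zeta)=\frac1{2\pi}\int_{\mathbb{R}}e^{2t(\lambda+\frac{i}{2}s)^2}e^{-2\eta(\lambda+\frac i2 s)}W_t^{\lambda+\frac i2 s}(\mathbf z,\mathbf w)\,ds .$$ Then: (i) $I_\lambda$ does not depend on $\lambda>0$; writing $W_t^+:=I_\lambda$, one has in particular $W_t^+(\mathbf z,\mathbf w,\zeta)=\lim_{\lambda\to0^+}I_\lambda(\mathbf z,\mathbf w,\zeta)$. (ii) For every $a>0$ and compact $Q\subseteq\mathbb{C}^{2n}$ there is $C=C(Q,a)>0$ such that for all $\varepsilon\in[a^{-1},a]$ and $\xi\in\mathbb{R}$, $\sup_{(\mathbf z,\mathbf w)\in Q}\int_{\mathbb{R}}\big|e^{2\varepsilon\eta}W_t^+(\mathbf z,\mathbf w,\xi+i\eta)\big|\,d\eta\le C .$ (iii) For every $\lambda>0$: $W_t^\lambda(\mathbf z,\mathbf w)=e^{-2t\lambda^2}\int_{\mathbb{R}}e^{2\eta\lambda}W_t^+(\mathbf z,\mathbf w,i\eta)\,d\eta$. (iv) $W_t^+$ is real valued and left $\mathbb H$-invariant: $W_t^+(hg)=W_t^+(g)$ for all $h\in\mathbb H$, $g\in\mathbb H_{\mathbb C}$.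
   Context: For $\mathbf a,\mathbf b\in\mathbb{C}^n$, $\mathbf a\cdot\mathbf b=\sum a_jb_j$. For $\mu\in\mathbb{C}$ with $\mathrm{Re}\,\mu>0$ and $r>0$ let $p_r^\mu(\mathbf z,\mathbf w)=(4\pi)^{-n}\big(\frac{\mu}{\sinh(r\mu)}\big)^n\exp\big(-\frac{\mu}{4}\coth(r\mu)(\mathbf z\cdot\mathbf z+\mathbf w\cdot\mathbf w)\big)$ and $W_t^\mu(\mathbf x+i\mathbf y,\mathbf u+i\mathbf v)=4^ne^{\mu(\mathbf u\cdot\mathbf y-\mathbf v\cdot\mathbf x)}p_{2t}^\mu(2\mathbf y,2\mathbf v)$ for $\mathbf x,\mathbf y,\mathbf u,\mathbf v\in\mathbb{R}^n$ (the integral defining $I_\lambda$ converges absolutely). $\mathbb H=\mathbb{R}^n\times\mathbb{R}^n\times\mathbb{R}$ with product $(\mathbf x,\mathbf u,\xi)(\mathbf x',\mathbf u',\xi')=(\mathbf x+\mathbf x',\mathbf u+\mathbf u',\xi+\xi'+\frac12(\mathbf u\cdot\mathbf x'-\mathbf x\cdot\mathbf u'))$; $\mathbb H_{\mathbb C}=\mathbb{C}^n\times\mathbb{C}^n\times\mathbb{C}$ with the same product formula, on which $\mathbb H$ acts by left multiplication. *)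

theory Defs
  imports "HOL-Analysis.Analysis"
begin

definition cdot :: "complex^'n \<Rightarrow> complex^'n \<Rightarrow> complex" where
  "cdot a b = (\<Sum>j\<in>UNIV. a$j * b$j)"

definition ccoth :: "complex \<Rightarrow> complex" where
  "ccoth x = cosh x / sinh x"

definition re_vec :: "complex^'n \<Rightarrow> real^'n" where
  "re_vec z = (\<chi> j. Re (z$j))"

definition im_vec :: "complex^'n \<Rightarrow> real^'n" where
  "im_vec z = (\<chi> j. Im (z$j))"

definition cvec :: "real^'n \<Rightarrow> complex^'n" where
  "cvec y = (\<chi> j. complex_of_real (y$j))"

definition heatp :: "real \<Rightarrow> complex \<Rightarrow> complex^'n \<Rightarrow> complex^'n \<Rightarrow> complex" where
  "heatp r \<mu> z w =
     inverse ((4 * complex_of_real pi) ^ CARD('n))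
     * (\<mu> / sinh (complex_of_real r * \<mu>)) ^ CARD('n)
     * exp (- (\<mu> / 4) * ccoth (complex_of_real r * \<mu>) * (cdot z z + cdot w w))"

definition Wt :: "real \<Rightarrow> complex \<Rightarrow> complex^'n \<Rightarrow> complex^'n \<Rightarrow> complex" where
  "Wt t \<mu> z w =
     4 ^ CARD('n)
     * exp (\<mu> * complex_of_real (re_vec w \<bullet> im_vec z - im_vec w \<bullet> re_vec z))
     * heatp (2 * t) \<mu> (cvec (2 *\<^sub>R im_vec z)) (cvec (2 *\<^sub>R im_vec w))"

definition Ilam :: "real \<Rightarrow> real \<Rightarrow> complex^'n \<Rightarrow> complex^'n \<Rightarrow> complex \<Rightarrow> complex" where
  "Ilam t lam z w \<zeta> =
     complex_of_real (inverse (2 * pi)) *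
     integral\<^sup>L lborel (\<lambda>s::real.
        let \<mu> = complex_of_real lam + \<i> * complex_of_real (s / 2) in
        exp (2 * complex_of_real t * \<mu>^2) * exp (- 2 * complex_of_real (Im \<zeta>) * \<mu>) * Wt t \<mu> z w)"

text \<open>W_t^+ := I_lambda (taken at lambda = 1; part (i) shows independence of lambda).\<close>
definition Wplus :: "real \<Rightarrow> complex^'n \<Rightarrow> complex^'n \<Rightarrow> complex \<Rightarrow> complex" where
  "Wplus t z w \<zeta> = Ilam t 1 z w \<zeta>"

definition heis_mult :: "(complex^'n) \<times> (complex^'n) \<times> complex \<Rightarrow> (complex^'n) \<times> (complex^'n) \<times> complex
                         \<Rightarrow> (complex^'n) \<times> (complex^'n) \<times> complex" where
  "heis_mult g g' = (case g of (x, u, \<xi>) \<Rightarrow> case g' of (x', u', \<xi>') \<Rightarrow>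
      (x + x', u + u', \<xi> + \<xi>' + (cdot u x' - cdot x u') / 2))"

definition hreal :: "real^'n \<Rightarrow> real^'n \<Rightarrow> real \<Rightarrow> (complex^'n) \<times> (complex^'n) \<times> complex" where
  "hreal a b c = (cvec a, cvec b, complex_of_real c)"

end

theory Submission
  imports Defs "HOL-Complex_Analysis.Complex_Analysis" "HOL-Probability.Probability" "HOL-Real_Asymp.Real_Asymp"
begin

text \<open>
  Along the line \<open>\<mu> = \<lambda> + iu\<close> the integrand of \<open>I\<^sub>\<lambda>\<close> is \<open>e^{-2\<eta>\<mu>}\<close> times
  \<open>\<mu> \<mapsto> e^{2t\<mu>^2} W_t^\<mu>(z, w)\<close>, a function that is holomorphic in \<open>Re \<mu> > 0\<close> and decays like
  \<open>e^{-tu^2}\<close> uniformly on vertical strips. Cauchy's theorem on long rectangles therefore moves the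
  line of integration freely, which gives (i). Choosing \<open>\<lambda> = 2\<epsilon>\<close> or \<open>\<lambda> = \<epsilon>/2\<close> according to the sign
  of \<open>\<eta>\<close> turns the same Gaussian bound into \<open>e^{2\<epsilon>\<eta>} |W_t^+(\<xi> + i\<eta>)| \<le> M e^{-|\<eta>|/a}\<close>, uniformly for
  \<open>(z, w)\<close> in a compact set, which gives (ii). On the imaginary axis \<open>\<pi> e^{2\<eta>\<lambda>} W_t^+(i\<eta>)\<close> is the
  Fourier transform at \<open>2\<eta>\<close> of \<open>u \<mapsto> e^{2t\<mu>^2} W_t^\<mu>(z, w)\<close>, so Fourier inversion at \<open>u = 0\<close>
  gives (iii). For (iv), the integrand is symmetric under \<open>\<mu> \<mapsto> cnj \<mu>\<close>, so the reflection \<open>u \<mapsto> -u\<close>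
  shows that \<open>W_t^+\<close> is real; and a left translation by an element of \<open>\<bbbH>\<close> changes \<open>u\<cdot>y - v\<cdot>x\<close>
  by some \<open>d\<close> and \<open>Im \<zeta>\<close> by \<open>d/2\<close>, two effects that cancel in \<open>e^{\<mu>d} e^{-2(d/2)\<mu>}\<close>.
\<close>

section \<open>Gaussian integrals and Fourier inversion on the real line\<close>

lemma integrable_exp_neg_square:
  fixes c :: real
  assumes "c > 0"
  shows "integrable lborel (\<lambda>s. exp (- c * s\<^sup>2))"
proof -
  have "integrable lborel (\<lambda>x. std_normal_density (0 + sqrt (2 * c) * x))"
    using integrable_std_normal_moment[of 0] assms by (intro lborel_integrable_real_affine) auto
  then have "integrable lborel (\<lambda>x. sqrt (2 * pi) * std_normal_density (sqrt (2 * c) * x))"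
    by simp
  moreover have "sqrt (2 * pi) * std_normal_density (sqrt (2 * c) * x) = exp (- c * x\<^sup>2)" for x
    using assms by (simp add: std_normal_density_def power_mult_distrib)
  ultimately show ?thesis by simp
qed

lemma integrable_exp_neg_abs:
  fixes c :: real
  assumes "c > 0"
  shows "integrable lborel (\<lambda>s. exp (- c * \<bar>s\<bar>))"
proof -
  let ?e = "exponential_density c"
  interpret p: prob_space "density lborel ?e"
    using prob_space_exponential_density[OF assms] .
  have "(\<integral>\<^sup>+x. ennreal (?e x) \<partial>lborel) = 1"
    using p.emeasure_space_1 by (simp add: emeasure_density)
  then have "integrable lborel ?e"
    using exponential_density_nonneg[OF assms] by (intro integrableI_nonneg) auto
  moreover from this have "integrable lborel (\<lambda>x. ?e (0 + (-1) * x))"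
    by (intro lborel_integrable_real_affine) auto
  ultimately have "integrable lborel (\<lambda>x. (?e x + ?e (- x)) / c)"
    by auto
  then show ?thesis
  proof (rule Bochner_Integration.integrable_bound)
    have "exp (- c * \<bar>x\<bar>) \<le> (?e x + ?e (- x)) / c" for x
      using assms exponential_density_nonneg[OF assms, of x] exponential_density_nonneg[OF assms, of "-x"]
      by (cases "x < 0") (auto simp: exponential_density_def field_simps)
    then show "AE x in lborel. norm (exp (- c * \<bar>x\<bar>)) \<le> norm ((?e x + ?e (- x)) / c)"
      using exponential_density_nonneg[OF assms] assms by (intro AE_I2) (simp add: abs_of_nonneg)
  qed simp
qed

lemma integrable_gaussian_dominated:
  fixes g :: "real \<Rightarrow> complex"
  assumes "continuous_on UNIV g" "c > 0" "\<And>s. norm (g s) \<le> C * exp (- c * s\<^sup>2)"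
  shows "integrable lborel g"
proof (rule Bochner_Integration.integrable_bound)
  show "integrable lborel (\<lambda>s. C * exp (- c * s\<^sup>2))"
    using integrable_exp_neg_square[OF assms(2)] by simp
  show "g \<in> borel_measurable lborel"
    using assms(1) borel_measurable_continuous_onI by simp
  show "AE s in lborel. norm (g s) \<le> norm (C * exp (- c * s\<^sup>2))"
    using assms(3) by (auto intro: order_trans[OF _ abs_ge_self])
qed

lemma tendsto_integral_symmetric_interval:
  fixes g :: "real \<Rightarrow> 'a::euclidean_space"
  assumes "integrable lborel g"
  shows "(\<lambda>n. integral {- real n..real n} g) \<longlonglongrightarrow> integral\<^sup>L lborel g"
proof -
  have int: "set_integrable lborel {- real n..real n} g" for n
    unfolding set_integrable_def by (rule integrable_mult_indicator) (auto simp: assms)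
  have eq: "integral {- real n..real n} g = (\<integral>x. indicator {- real n..real n} x *\<^sub>R g x \<partial>lborel)" for n
    using set_borel_integral_eq_integral(2)[OF int[of n]] by (simp add: set_lebesgue_integral_def)
  have "(\<lambda>n. \<integral>x. indicator {- real n..real n} x *\<^sub>R g x \<partial>lborel) \<longlonglongrightarrow> integral\<^sup>L lborel g"
  proof (rule integral_dominated_convergence[where w = "\<lambda>x. norm (g x)"])
    show "AE x in lborel. (\<lambda>n. indicator {- real n..real n} x *\<^sub>R g x) \<longlonglongrightarrow> g x"
    proof (rule AE_I2)
      fix x :: real
      obtain N :: nat where "\<bar>x\<bar> \<le> real N" using real_arch_simple by blast
      then have "\<forall>\<^sub>F n in sequentially. indicator {- real n..real n} x *\<^sub>R g x = g x"
        unfolding eventually_sequentially by (intro exI[of _ N]) (auto simp: indicator_def)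
      then show "(\<lambda>n. indicator {- real n..real n} x *\<^sub>R g x) \<longlonglongrightarrow> g x"
        by (rule tendsto_eventually)
    qed
  qed (use assms in \<open>auto simp: indicator_def\<close>)
  then show ?thesis by (simp add: eq)
qed

definition fourier_transform :: "(real \<Rightarrow> complex) \<Rightarrow> real \<Rightarrow> complex" where
  "fourier_transform G \<eta> = (\<integral>s. G s * exp (- (\<i> * of_real (\<eta> * s))) \<partial>lborel)"

lemma fourier_transform_gaussian:
  fixes r :: real
  assumes "r > 0"
  shows "fourier_transform (\<lambda>\<eta>. of_real (exp (- (r\<^sup>2 / 4) * \<eta>\<^sup>2))) s
       = of_real (2 * sqrt pi / r * exp (- (s\<^sup>2 / r\<^sup>2)))"
proof -
  define c where "c = r / sqrt 2"
  define \<theta> where "\<theta> = - s / c"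
  have c: "c > 0" using assms by (simp add: c_def)
  let ?F = "fourier_transform (\<lambda>\<eta>. of_real (exp (- (r\<^sup>2 / 4) * \<eta>\<^sup>2))) s"
  have "of_real (exp (- (\<theta>\<^sup>2) / 2)) = char std_normal_distribution \<theta>"
    by (simp add: char_std_normal_distribution)
  also have "\<dots> = (\<integral>x. std_normal_density x *\<^sub>R iexp (\<theta> * x) \<partial>lborel)"
    unfolding char_def by (subst integral_density) (auto simp: normal_density_nonneg)
  also have "\<dots> = c *\<^sub>R (\<integral>y. std_normal_density (0 + c * y) *\<^sub>R iexp (\<theta> * (0 + c * y)) \<partial>lborel)"
    using lborel_integral_real_affine[of c "\<lambda>x. std_normal_density x *\<^sub>R iexp (\<theta> * x)" 0] c by simp
  also have "\<dots> = of_real (c / sqrt (2 * pi)) * ?F"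
  proof -
    have "std_normal_density (0 + c * y) *\<^sub>R iexp (\<theta> * (0 + c * y))
        = of_real (1 / sqrt (2 * pi)) * (of_real (exp (- (r\<^sup>2 / 4) * y\<^sup>2)) * exp (- (\<i> * of_real (s * y))))" for y
    proof -
      have "\<theta> * (0 + c * y) = - (s * y)" using c by (simp add: \<theta>_def)
      moreover have "(c * y)\<^sup>2 / 2 = (r\<^sup>2 / 4) * y\<^sup>2" by (simp add: c_def power_mult_distrib power_divide)
      ultimately show ?thesis
        by (simp add: std_normal_density_def scaleR_conv_of_real mult_ac)
    qed
    then show ?thesis by (simp add: fourier_transform_def scaleR_conv_of_real)
  qed
  finally have F: "of_real (exp (- (\<theta>\<^sup>2) / 2)) = of_real (c / sqrt (2 * pi)) * ?F" .
  have c_eq: "c / sqrt (2 * pi) = r / (2 * sqrt pi)"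
    by (simp add: c_def real_sqrt_mult)
  have \<theta>_eq: "- (\<theta>\<^sup>2) / 2 = - (s\<^sup>2 / r\<^sup>2)"
    using assms by (simp add: \<theta>_def c_def power_divide power_mult_distrib)
  from F have eq: "of_real (exp (- (s\<^sup>2 / r\<^sup>2))) = of_real (r / (2 * sqrt pi)) * ?F"
    unfolding c_eq \<theta>_eq .
  have "?F = of_real (2 * sqrt pi / r) * (of_real (r / (2 * sqrt pi)) * ?F)"
    using assms by (simp only: mult.assoc[symmetric] flip: of_real_mult) simp
  also have "\<dots> = of_real (2 * sqrt pi / r * exp (- (s\<^sup>2 / r\<^sup>2)))"
    by (simp only: eq of_real_mult)
  finally show ?thesis .
qed

lemma integral_exp_neg_square: "(\<integral>u. exp (- u\<^sup>2) \<partial>lborel) = sqrt pi"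
  using fourier_transform_gaussian[of 2 0] by (simp add: fourier_transform_def)

lemma integral_fourier_transform_mult_gaussian:
  fixes G :: "real \<Rightarrow> complex" and r :: real
  assumes G: "integrable lborel G" and r: "r > 0"
  shows "(\<integral>\<eta>. fourier_transform G \<eta> * of_real (exp (- (r\<^sup>2 / 4) * \<eta>\<^sup>2)) \<partial>lborel)
       = (\<integral>s. G s * of_real (2 * sqrt pi / r * exp (- (s\<^sup>2 / r\<^sup>2))) \<partial>lborel)"
proof -
  define q where "q \<eta> = exp (- (r\<^sup>2 / 4) * \<eta>\<^sup>2)" for \<eta>
  define f where "f \<eta> s = G s * exp (- (\<i> * of_real (\<eta> * s))) * of_real (q \<eta>)" for \<eta> s
  have [measurable]: "G \<in> borel_measurable borel"
    using borel_measurable_integrable[OF G] by simp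
  have fm: "(\<lambda>(\<eta>, s). f \<eta> s) \<in> borel_measurable (lborel \<Otimes>\<^sub>M lborel)"
    unfolding f_def q_def by measurable
  have norm_f: "norm (f \<eta> s) = q \<eta> * norm (G s)" for \<eta> s
    by (simp add: f_def q_def norm_mult)
  have fint: "integrable (lborel \<Otimes>\<^sub>M lborel) (\<lambda>(\<eta>, s). f \<eta> s)"
  proof (rule lborel_pair.Fubini_integrable[OF fm])
    have "integrable lborel (\<lambda>\<eta>. q \<eta> * (\<integral>s. norm (G s) \<partial>lborel))"
      using integrable_exp_neg_square[of "r\<^sup>2 / 4"] r by (simp add: q_def)
    then show "integrable lborel (\<lambda>\<eta>. \<integral>s. norm (case (\<eta>, s) of (\<eta>, s) \<Rightarrow> f \<eta> s) \<partial>lborel)"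
      by (simp add: norm_f)
    have "integrable lborel (\<lambda>s. f \<eta> s)" for \<eta>
    proof (rule Bochner_Integration.integrable_bound[OF integrable_norm[OF G]])
      show "(\<lambda>s. f \<eta> s) \<in> borel_measurable lborel"
        unfolding f_def by measurable
      show "AE s in lborel. norm (f \<eta> s) \<le> norm (norm (G s))"
        by (intro AE_I2) (simp add: norm_f q_def mult_left_le_one_le)
    qed
    then show "AE \<eta> in lborel. integrable lborel (\<lambda>s. case (\<eta>, s) of (\<eta>, s) \<Rightarrow> f \<eta> s)"
      by simp
  qed
  have "(\<integral>\<eta>. (\<integral>s. f \<eta> s \<partial>lborel) \<partial>lborel) = (\<integral>s. (\<integral>\<eta>. f \<eta> s \<partial>lborel) \<partial>lborel)"
    using lborel_pair.Fubini_integral[OF fint] by simp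
  moreover have "(\<integral>\<eta>. f \<eta> s \<partial>lborel) = G s * of_real (2 * sqrt pi / r * exp (- (s\<^sup>2 / r\<^sup>2)))" for s
  proof -
    have "(\<integral>\<eta>. f \<eta> s \<partial>lborel) = G s * fourier_transform (\<lambda>\<eta>. of_real (q \<eta>)) s"
      by (simp add: fourier_transform_def f_def mult_ac)
    then show ?thesis
      using fourier_transform_gaussian[OF r, of s] by (simp add: q_def)
  qed
  ultimately show ?thesis
    by (simp add: fourier_transform_def f_def q_def)
qed

lemma gaussian_approximate_identity:
  fixes G :: "real \<Rightarrow> complex" and r :: "nat \<Rightarrow> real"
  assumes G: "G \<in> borel_measurable borel" "isCont G 0" "\<And>s. norm (G s) \<le> C"
    and r: "r \<longlonglongrightarrow> 0" "\<And>n. r n > 0"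
  shows "(\<lambda>n. \<integral>s. G s * of_real (exp (- (s\<^sup>2 / (r n)\<^sup>2)) / (sqrt pi * r n)) \<partial>lborel) \<longlonglongrightarrow> G 0"
proof -
  let ?k = "\<lambda>u. exp (- u\<^sup>2) / sqrt pi"
  have rescale: "(\<integral>s. G s * of_real (exp (- (s\<^sup>2 / (r n)\<^sup>2)) / (sqrt pi * r n)) \<partial>lborel)
      = (\<integral>u. G (r n * u) * of_real (?k u) \<partial>lborel)" for n
  proof -
    have "(\<integral>s. G s * of_real (exp (- (s\<^sup>2 / (r n)\<^sup>2)) / (sqrt pi * r n)) \<partial>lborel)
        = r n *\<^sub>R (\<integral>u. G (0 + r n * u) * of_real (exp (- ((0 + r n * u)\<^sup>2 / (r n)\<^sup>2)) / (sqrt pi * r n)) \<partial>lborel)"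
      using r(2)[of n] by (subst lborel_integral_real_affine[where c = "r n" and t = 0]) simp_all
    also have "\<dots> = (\<integral>u. G (r n * u) * of_real (?k u) \<partial>lborel)"
      using r(2)[of n] by (simp add: power_mult_distrib scaleR_conv_of_real field_simps flip: integral_mult_right_zero)
    finally show ?thesis .
  qed
  have "(\<lambda>n. \<integral>u. G (r n * u) * of_real (?k u) \<partial>lborel) \<longlonglongrightarrow> (\<integral>u. G 0 * of_real (?k u) \<partial>lborel)"
  proof (rule integral_dominated_convergence[where w = "\<lambda>u. C * ?k u"])
    show "integrable lborel (\<lambda>u. C * ?k u)"
      using integrable_exp_neg_square[of 1] by simp
    show "AE u in lborel. (\<lambda>n. G (r n * u) * of_real (?k u)) \<longlonglongrightarrow> G 0 * of_real (?k u)"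
    proof (rule AE_I2)
      fix u
      have "(\<lambda>n. r n * u) \<longlonglongrightarrow> 0"
        using tendsto_mult_left_zero[OF r(1)] by simp
      then show "(\<lambda>n. G (r n * u) * of_real (?k u)) \<longlonglongrightarrow> G 0 * of_real (?k u)"
        by (intro tendsto_intros isCont_tendsto_compose[OF G(2)])
    qed
    show "AE u in lborel. norm (G (r n * u) * of_real (?k u)) \<le> C * ?k u" for n
      by (intro AE_I2) (simp add: norm_mult norm_divide divide_right_mono mult_right_mono G(3))
  qed (use G(1) in simp_all)
  moreover have "(\<integral>u. G 0 * of_real (?k u) \<partial>lborel) = G 0"
    by (simp add: integral_exp_neg_square)
  ultimately show ?thesis
    by (simp only: rescale)
qed

lemma fourier_inversion_at_zero:
  fixes G :: "real \<Rightarrow> complex"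
  assumes G: "G \<in> borel_measurable borel" "isCont G 0" "integrable lborel G" "\<And>s. norm (G s) \<le> C"
    and FG: "integrable lborel (fourier_transform G)"
  shows "(\<integral>\<eta>. fourier_transform G \<eta> \<partial>lborel) = 2 * pi * G 0"
proof -
  txt \<open>Damp \<open>fourier_transform G\<close> by the Gaussian \<open>e^{-r^2\<eta>^2/4}\<close>, exchange the integrals and let \<open>r \<rightarrow> 0\<close>.\<close>
  define r where "r n = inverse (real (Suc n))" for n
  have r: "r \<longlonglongrightarrow> 0" "r n > 0" for n
    unfolding r_def by (rule LIMSEQ_inverse_real_of_nat) simp
  let ?q = "\<lambda>n \<eta>. exp (- ((r n)\<^sup>2 / 4) * \<eta>\<^sup>2)"
  have "(\<lambda>n. \<integral>\<eta>. fourier_transform G \<eta> * of_real (?q n \<eta>) \<partial>lborel) \<longlonglongrightarrow> (\<integral>\<eta>. fourier_transform G \<eta> \<partial>lborel)"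
  proof (rule integral_dominated_convergence[where w = "\<lambda>\<eta>. norm (fourier_transform G \<eta>)"])
    show "AE \<eta> in lborel. (\<lambda>n. fourier_transform G \<eta> * of_real (?q n \<eta>)) \<longlonglongrightarrow> fourier_transform G \<eta>"
    proof (rule AE_I2)
      fix \<eta>
      have "(\<lambda>n. fourier_transform G \<eta> * of_real (?q n \<eta>)) \<longlonglongrightarrow> fourier_transform G \<eta> * of_real (exp (- (0\<^sup>2 / 4) * \<eta>\<^sup>2))"
        by (intro tendsto_intros r) simp
      then show "(\<lambda>n. fourier_transform G \<eta> * of_real (?q n \<eta>)) \<longlonglongrightarrow> fourier_transform G \<eta>"
        by simp
    qed
    show "AE \<eta> in lborel. norm (fourier_transform G \<eta> * of_real (?q n \<eta>)) \<le> norm (fourier_transform G \<eta>)" for n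
      by (intro AE_I2) (simp add: norm_mult mult_left_le)
  qed (use FG in auto)
  moreover have "(\<integral>\<eta>. fourier_transform G \<eta> * of_real (?q n \<eta>) \<partial>lborel)
      = 2 * pi * (\<integral>s. G s * of_real (exp (- (s\<^sup>2 / (r n)\<^sup>2)) / (sqrt pi * r n)) \<partial>lborel)" for n
  proof -
    have "2 * sqrt pi / r n * exp (- (s\<^sup>2 / (r n)\<^sup>2)) = 2 * pi * (exp (- (s\<^sup>2 / (r n)\<^sup>2)) / (sqrt pi * r n))" for s
      using r(2)[of n] by (simp add: field_simps real_sqrt_mult[symmetric])
    then have "(\<integral>s. G s * of_real (2 * sqrt pi / r n * exp (- (s\<^sup>2 / (r n)\<^sup>2))) \<partial>lborel)
        = (\<integral>s. 2 * pi * (G s * of_real (exp (- (s\<^sup>2 / (r n)\<^sup>2)) / (sqrt pi * r n))) \<partial>lborel)"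
      by (simp only: of_real_mult mult_ac of_real_numeral)
    then show ?thesis
      using integral_fourier_transform_mult_gaussian[OF G(3) r(2)] by simp
  qed
  ultimately have "(\<lambda>n. 2 * pi * (\<integral>s. G s * of_real (exp (- (s\<^sup>2 / (r n)\<^sup>2)) / (sqrt pi * r n)) \<partial>lborel))
      \<longlonglongrightarrow> (\<integral>\<eta>. fourier_transform G \<eta> \<partial>lborel)"
    by simp
  moreover have "(\<lambda>n. 2 * pi * (\<integral>s. G s * of_real (exp (- (s\<^sup>2 / (r n)\<^sup>2)) / (sqrt pi * r n)) \<partial>lborel))
      \<longlonglongrightarrow> 2 * pi * G 0"
    by (intro tendsto_intros gaussian_approximate_identity[OF G(1,2,4) r])
  ultimately show ?thesis
    using LIMSEQ_unique by blast
qed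

section \<open>Shifting line integrals of holomorphic functions\<close>

lemma has_contour_integral_vertical_linepath:
  fixes f :: "complex \<Rightarrow> complex"
  assumes cont: "continuous_on {z. Re z = l} f" and T: "T > 0"
  shows "(f has_contour_integral (\<i> * integral {-T..T} (\<lambda>s. f (Complex l s))))
           (linepath (Complex l (-T)) (Complex l T))"
proof -
  let ?g = "\<lambda>s. f (Complex l s)"
  have "continuous_on UNIV ?g"
    by (rule continuous_on_compose2[OF cont]) (auto intro: continuous_intros)
  then have "(?g has_integral integral {-T..T} ?g) (cbox (-T) T)"
    using integrable_continuous_interval continuous_on_subset by fastforce
  from has_integral_affinity'[OF this, of "2 * T" "-T"] T
  have "((\<lambda>x. ?g (2 * T * x - T)) has_integral ((inverse T / 2) *\<^sub>R integral {-T..T} ?g)) (cbox 0 1)"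
    by simp
  then have "((\<lambda>x. ?g (2 * T * x - T) * (\<i> * (2 * T))) has_integral
      ((inverse T / 2) *\<^sub>R integral {-T..T} ?g) * (\<i> * (2 * T))) (cbox 0 1)"
    by (rule has_integral_mult_left)
  moreover have "((inverse T / 2) *\<^sub>R integral {-T..T} ?g) * (\<i> * (2 * T)) = \<i> * integral {-T..T} ?g"
    using T by (simp add: scaleR_conv_of_real field_simps)
  moreover have "linepath (Complex l (-T)) (Complex l T) x = Complex l (2 * T * x - T)" for x
    by (simp add: linepath_def complex_eq_iff algebra_simps)
  moreover have "Complex l T - Complex l (-T) = \<i> * (2 * T)"
    by (simp add: complex_eq_iff)
  ultimately show ?thesis
    by (simp add: has_contour_integral_linepath)
qed

lemma norm_contour_integral_horizontal_le:
  fixes f :: "complex \<Rightarrow> complex"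
  assumes "f contour_integrable_on linepath (Complex x1 \<tau>) (Complex x2 \<tau>)" "0 \<le> B"
    and "\<And>x. x \<in> closed_segment x1 x2 \<Longrightarrow> norm (f (Complex x \<tau>)) \<le> B"
  shows "norm (contour_integral (linepath (Complex x1 \<tau>) (Complex x2 \<tau>)) f) \<le> B * \<bar>x2 - x1\<bar>"
proof -
  have "norm (f z) \<le> B" if "z \<in> closed_segment (Complex x1 \<tau>) (Complex x2 \<tau>)" for z
    using that assms(3)[of "Re z"] by (cases z) (simp add: closed_segment_same_Im)
  then have "norm (contour_integral (linepath (Complex x1 \<tau>) (Complex x2 \<tau>)) f)
      \<le> B * norm (Complex x2 \<tau> - Complex x1 \<tau>)"
    by (rule has_contour_integral_bound_linepath[OF has_contour_integral_integral[OF assms(1)] assms(2)])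
  then show ?thesis
    by (simp add: cmod_def)
qed

lemma norm_vertical_integral_diff_le:
  fixes f :: "complex \<Rightarrow> complex"
  assumes hol: "f holomorphic_on S" and S: "convex S" "{z. l1 \<le> Re z \<and> Re z \<le> l2} \<subseteq> S"
    and l: "l1 \<le> l2" and T: "T > 0"
    and bd: "\<And>x. l1 \<le> x \<Longrightarrow> x \<le> l2 \<Longrightarrow> norm (f (Complex x T)) \<le> B \<and> norm (f (Complex x (-T))) \<le> B"
  shows "norm (integral {-T..T} (\<lambda>s. f (Complex l2 s)) - integral {-T..T} (\<lambda>s. f (Complex l1 s)))
           \<le> 2 * (l2 - l1) * B"
proof -
  let ?a1 = "Complex l1 (-T)" and ?a2 = "Complex l2 (-T)" and ?a3 = "Complex l2 T" and ?a4 = "Complex l1 T"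
  let ?R = "linepath ?a1 ?a2 +++ (linepath ?a2 ?a3 +++ (linepath ?a3 ?a4 +++ linepath ?a4 ?a1))"
  let ?h1 = "contour_integral (linepath ?a1 ?a2) f" and ?h3 = "contour_integral (linepath ?a3 ?a4) f"
  define J where "J l = integral {-T..T} (\<lambda>s. f (Complex l s))" for l
  have contf: "continuous_on S f"
    using hol holomorphic_on_imp_continuous_on by blast
  have inS: "?a1 \<in> S" "?a2 \<in> S" "?a3 \<in> S" "?a4 \<in> S"
    using S(2) l by auto
  have segS: "closed_segment a b \<subseteq> S" if "a \<in> S" "b \<in> S" for a b
    using that S(1) by (rule closed_segment_subset)
  have segment_integrable: "f contour_integrable_on linepath a b" if "a \<in> S" "b \<in> S" for a b
    by (rule contour_integrable_continuous_linepath, rule continuous_on_subset[OF contf segS[OF that]])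
  have B: "0 \<le> B"
    using bd[of l1] l norm_ge_zero order_trans by blast
  have seg: "closed_segment l1 l2 = {l1..l2}" "closed_segment l2 l1 = {l1..l2}"
    using l by (auto simp: closed_segment_eq_real_ivl)
  have "norm ?h1 \<le> B * (l2 - l1)" "norm ?h3 \<le> B * (l2 - l1)"
    using norm_contour_integral_horizontal_le[OF segment_integrable[OF inS(1,2)] B]
      norm_contour_integral_horizontal_le[OF segment_integrable[OF inS(3,4)] B] bd l
    by (simp_all add: seg)
  then have "norm ?h1 + norm ?h3 \<le> 2 * (l2 - l1) * B"
    by (simp add: algebra_simps)
  have vcont: "continuous_on {z. Re z = l} f" if "l1 \<le> l" "l \<le> l2" for l
    using that S(2) by (intro continuous_on_subset[OF contf]) auto
  have "(f has_contour_integral (?h1 + (\<i> * J l2 + (?h3 + - (\<i> * J l1))))) ?R"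
  proof (intro has_contour_integral_join has_contour_integral_integral valid_path_join valid_path_linepath)
    show "(f has_contour_integral \<i> * J l2) (linepath ?a2 ?a3)"
      unfolding J_def using vcont l T by (intro has_contour_integral_vertical_linepath) auto
    show "(f has_contour_integral - (\<i> * J l1)) (linepath ?a4 ?a1)"
      using has_contour_integral_reversepath[OF valid_path_linepath
          has_contour_integral_vertical_linepath[OF vcont T]] l
      by (simp add: J_def)
  qed (simp_all add: segment_integrable inS)
  moreover have "(f has_contour_integral 0) ?R"
    using segS inS by (intro Cauchy_theorem_convex_simple[OF hol S(1)]) (auto simp: path_image_join)
  ultimately have "\<i> * (J l2 - J l1) = - (?h1 + ?h3)"
    using has_contour_integral_unique by (fastforce simp: algebra_simps)
  then have "norm (J l2 - J l1) = norm (?h1 + ?h3)"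
    by (metis norm_ii norm_minus_cancel norm_mult mult_1)
  also have "\<dots> \<le> norm ?h1 + norm ?h3"
    by (rule norm_triangle_ineq)
  finally show ?thesis
    unfolding J_def using \<open>norm ?h1 + norm ?h3 \<le> 2 * (l2 - l1) * B\<close> by linarith
qed

lemma integral_vertical_line_shift:
  fixes f :: "complex \<Rightarrow> complex"
  assumes hol: "f holomorphic_on S" and S: "convex S" "{z. l1 \<le> Re z \<and> Re z \<le> l2} \<subseteq> S"
    and l: "l1 \<le> l2" and c: "c > 0"
    and bd: "\<And>z. l1 \<le> Re z \<Longrightarrow> Re z \<le> l2 \<Longrightarrow> norm (f z) \<le> C * exp (- c * (Im z)\<^sup>2)"
  shows "(\<integral>s. f (Complex l1 s) \<partial>lborel) = (\<integral>s. f (Complex l2 s) \<partial>lborel)"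
proof -
  define J where "J l T = integral {-T..T} (\<lambda>s. f (Complex l s))" for l T
  have integrable: "integrable lborel (\<lambda>s. f (Complex l s))" if "l1 \<le> l" "l \<le> l2" for l
  proof (rule integrable_gaussian_dominated[OF _ c])
    have "continuous_on {z. Re z = l} f"
      using that S(2) holomorphic_on_imp_continuous_on[OF hol] by (auto intro: continuous_on_subset)
    then show "continuous_on UNIV (\<lambda>s. f (Complex l s))"
      by (rule continuous_on_compose2) (auto intro: continuous_intros)
    show "norm (f (Complex l s)) \<le> C * exp (- c * s\<^sup>2)" for s
      using bd[of "Complex l s"] that by simp
  qed
  have "(\<lambda>n. J l2 (real n) - J l1 (real n)) \<longlonglongrightarrow>
      (\<integral>s. f (Complex l2 s) \<partial>lborel) - (\<integral>s. f (Complex l1 s) \<partial>lborel)"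
    unfolding J_def using l by (intro tendsto_diff tendsto_integral_symmetric_interval integrable) auto
  moreover have "(\<lambda>n. J l2 (real n) - J l1 (real n)) \<longlonglongrightarrow> 0"
  proof (rule Lim_null_comparison)
    show "\<forall>\<^sub>F n in sequentially. norm (J l2 (real n) - J l1 (real n)) \<le> 2 * (l2 - l1) * (C * exp (- c * (real n)\<^sup>2))"
    proof (intro eventually_sequentiallyI[of 1] norm_vertical_integral_diff_le[OF hol S l, folded J_def])
      show "0 < real n" if "1 \<le> n" for n
        using that by simp
      fix n :: nat and x assume "l1 \<le> x" "x \<le> l2"
      then show "norm (f (Complex x (real n))) \<le> C * exp (- c * (real n)\<^sup>2) \<and>
          norm (f (Complex x (- real n))) \<le> C * exp (- c * (real n)\<^sup>2)"
        using bd[of "Complex x (real n)"] bd[of "Complex x (- real n)"] by simp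
    qed
    have "(\<lambda>n::nat. exp (- c * (real n)\<^sup>2)) \<longlonglongrightarrow> 0"
      using c by real_asymp
    then show "(\<lambda>n. 2 * (l2 - l1) * (C * exp (- c * (real n)\<^sup>2))) \<longlonglongrightarrow> 0"
      by (intro tendsto_mult_right_zero)
  qed
  ultimately show ?thesis
    using LIMSEQ_unique by fastforce
qed

section \<open>The heat kernel as a function of \<open>\<mu>\<close>\<close>

lemma sinh_Re_le_norm_sinh: "sinh (Re w) \<le> norm (sinh (w :: complex))"
proof -
  have "norm (exp w) - norm (exp (- w)) \<le> norm (exp w - exp (- w))"
    by (rule norm_triangle_ineq2)
  then show ?thesis
    by (simp add: sinh_field_def norm_exp_eq_Re norm_divide)
qed

lemma norm_cosh_le_cosh_Re: "norm (cosh (w :: complex)) \<le> cosh (Re w)"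
proof -
  have "norm (exp w + exp (- w)) \<le> norm (exp w) + norm (exp (- w))"
    by (rule norm_triangle_ineq)
  then show ?thesis
    by (simp add: cosh_field_def norm_exp_eq_Re norm_divide)
qed

lemma sinh_nonzero_if_Re_pos: "0 < Re w \<Longrightarrow> sinh (w :: complex) \<noteq> 0"
  using sinh_Re_le_norm_sinh[of w] sinh_real_pos_iff[of "Re w"] by auto

lemma norm_ccoth_le:
  fixes w :: complex
  assumes "0 < a" "a \<le> Re w" "Re w \<le> b"
  shows "norm (ccoth w) \<le> cosh b / sinh a"
proof -
  have "norm (cosh w) \<le> cosh b"
    using norm_cosh_le_cosh_Re[of w] assms cosh_real_nonneg_le_iff[of "Re w" b] by linarith
  moreover have "sinh a \<le> norm (sinh w)"
    using sinh_Re_le_norm_sinh[of w] assms by (meson order_trans sinh_real_le_iff)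
  ultimately have "norm (cosh w) / norm (sinh w) \<le> cosh b / sinh a"
    using assms by (intro frac_le) auto
  then show ?thesis
    by (simp add: ccoth_def norm_divide)
qed

lemma cnj_sinh: "cnj (sinh z) = sinh (cnj z)"
  by (simp add: sinh_field_def exp_cnj)

lemma cnj_cosh: "cnj (cosh z) = cosh (cnj z)"
  by (simp add: cosh_field_def exp_cnj)

definition kernel_phase :: "complex^'n \<Rightarrow> complex^'n \<Rightarrow> real" where
  "kernel_phase z w = re_vec w \<bullet> im_vec z - im_vec w \<bullet> re_vec z"

definition kernel_radius :: "complex^'n \<Rightarrow> complex^'n \<Rightarrow> real" where
  "kernel_radius z w = (2 *\<^sub>R im_vec z) \<bullet> (2 *\<^sub>R im_vec z) + (2 *\<^sub>R im_vec w) \<bullet> (2 *\<^sub>R im_vec w)"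

text \<open>The function \<open>\<mu> \<mapsto> e^{2t\<mu>^2} W_t^\<mu>(z, w)\<close>; it depends on \<open>z = x + iy\<close>, \<open>w = u + iv\<close>
  only through \<open>a = u\<cdot>y - v\<cdot>x\<close> and \<open>\<rho> = |2y|^2 + |2v|^2\<close>.\<close>
definition heat_profile :: "nat \<Rightarrow> real \<Rightarrow> real \<Rightarrow> real \<Rightarrow> complex \<Rightarrow> complex" where
  "heat_profile n t a \<rho> \<mu> = exp (2 * of_real t * \<mu>\<^sup>2) *
     (4 ^ n * exp (\<mu> * of_real a) *
      (inverse ((4 * of_real pi) ^ n) * (\<mu> / sinh (of_real (2 * t) * \<mu>)) ^ n *
       exp (- (\<mu> / 4) * ccoth (of_real (2 * t) * \<mu>) * of_real \<rho>)))"

lemma cdot_cvec_self: "cdot (cvec a) (cvec a) = of_real (a \<bullet> a)"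
  unfolding cdot_def cvec_def inner_vec_def by simp

lemma exp_mult_Wt_eq_heat_profile:
  fixes z w :: "complex^'n"
  shows "exp (2 * of_real t * \<mu>\<^sup>2) * Wt t \<mu> z w
       = heat_profile CARD('n) t (kernel_phase z w) (kernel_radius z w) \<mu>"
  unfolding Wt_def heatp_def heat_profile_def kernel_phase_def kernel_radius_def cdot_cvec_self
  by (simp only: of_real_add mult.assoc)

lemma kernel_radius_nonneg: "0 \<le> kernel_radius z w"
  unfolding kernel_radius_def by simp

lemma norm_re_vec_le: "norm (re_vec z) \<le> norm z"
  by (rule norm_le_componentwise_cart) (simp add: re_vec_def abs_Re_le_cmod)

lemma norm_im_vec_le: "norm (im_vec z) \<le> norm z"
  by (rule norm_le_componentwise_cart) (simp add: im_vec_def abs_Im_le_cmod)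

lemma abs_kernel_phase_le:
  assumes "norm z \<le> B" "norm w \<le> B"
  shows "\<bar>kernel_phase z w\<bar> \<le> 2 * B\<^sup>2"
proof -
  have "0 \<le> B"
    using assms(1) norm_ge_zero order_trans by blast
  moreover have "norm (re_vec w) \<le> B" "norm (im_vec z) \<le> B" "norm (im_vec w) \<le> B" "norm (re_vec z) \<le> B"
    using assms norm_re_vec_le[of w] norm_im_vec_le[of z] norm_im_vec_le[of w] norm_re_vec_le[of z] by linarith+
  ultimately have "norm (re_vec w) * norm (im_vec z) + norm (im_vec w) * norm (re_vec z) \<le> B * B + B * B"
    by (intro add_mono mult_mono) auto
  moreover have "\<bar>kernel_phase z w\<bar> \<le> \<bar>re_vec w \<bullet> im_vec z\<bar> + \<bar>im_vec w \<bullet> re_vec z\<bar>"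
    unfolding kernel_phase_def by (rule abs_triangle_ineq4)
  moreover have "\<bar>re_vec w \<bullet> im_vec z\<bar> + \<bar>im_vec w \<bullet> re_vec z\<bar>
      \<le> norm (re_vec w) * norm (im_vec z) + norm (im_vec w) * norm (re_vec z)"
    by (intro add_mono Cauchy_Schwarz_ineq2)
  ultimately show ?thesis
    by (simp add: power2_eq_square)
qed

lemma kernel_radius_le:
  assumes "norm z \<le> B" "norm w \<le> B"
  shows "kernel_radius z w \<le> 8 * B\<^sup>2"
proof -
  have "kernel_radius z w = 4 * (norm (im_vec z))\<^sup>2 + 4 * (norm (im_vec w))\<^sup>2"
    unfolding kernel_radius_def by (simp add: power2_norm_eq_inner)
  also have "\<dots> \<le> 4 * B\<^sup>2 + 4 * B\<^sup>2"
    using assms norm_im_vec_le[of z] norm_im_vec_le[of w]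
    by (intro add_mono mult_left_mono power_mono) auto
  finally show ?thesis
    by simp
qed

lemma kernel_phase_translate:
  "kernel_phase (cvec a + z) (cvec b + w) = kernel_phase z w + (b \<bullet> im_vec z - a \<bullet> im_vec w)"
  by (simp add: kernel_phase_def re_vec_def im_vec_def cvec_def inner_vec_def sum_subtractf
      sum.distrib algebra_simps)

lemma kernel_radius_translate: "kernel_radius (cvec a + z) (cvec b + w) = kernel_radius z w"
  by (simp add: kernel_radius_def im_vec_def cvec_def)

lemma heat_profile_holomorphic:
  assumes "t > 0"
  shows "heat_profile n t a \<rho> holomorphic_on {\<mu>. 0 < Re \<mu>}"
proof -
  have "sinh (of_real (2 * t) * \<mu>) \<noteq> 0" if "0 < Re \<mu>" for \<mu>
    using assms that by (intro sinh_nonzero_if_Re_pos) simp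
  then show ?thesis
    unfolding heat_profile_def ccoth_def sinh_field_def[where 'a = complex] cosh_field_def[where 'a = complex]
    by (intro holomorphic_intros) (auto simp: sinh_field_def)
qed

lemma heat_profile_cnj: "heat_profile n t a \<rho> (cnj \<mu>) = cnj (heat_profile n t a \<rho> \<mu>)"
  unfolding heat_profile_def ccoth_def by (simp add: exp_cnj cnj_sinh cnj_cosh)

lemma heat_profile_phase_shift:
  "heat_profile n t (a + d) \<rho> \<mu> = heat_profile n t a \<rho> \<mu> * exp (\<mu> * of_real d)"
  unfolding heat_profile_def by (simp add: distrib_left exp_add mult_ac)

lemma heat_profile_phase_shift_compensation:
  "heat_profile n t (a + d) \<rho> \<mu> * exp (- 2 * of_real (\<eta> + d / 2) * \<mu>)
     = heat_profile n t a \<rho> \<mu> * exp (- 2 * of_real \<eta> * \<mu>)"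
proof -
  have "\<mu> * of_real d + - 2 * of_real (\<eta> + d / 2) * \<mu> = - 2 * of_real \<eta> * \<mu>"
    by (simp add: algebra_simps)
  then have "exp (\<mu> * of_real d) * exp (- 2 * of_real (\<eta> + d / 2) * \<mu>) = exp (- 2 * of_real \<eta> * \<mu>)"
    by (simp flip: exp_add)
  then show ?thesis
    by (simp only: heat_profile_phase_shift mult.assoc)
qed

lemma norm_heat_profile_hyperbolic_factor_le:
  fixes \<mu> :: complex and n :: nat
  assumes t: "t > 0" and \<alpha>: "0 < \<alpha>" and x: "\<alpha> \<le> Re \<mu>" "Re \<mu> \<le> \<beta>" and \<rho>: "0 \<le> \<rho>" "\<rho> \<le> KR"
  defines "s \<equiv> sinh (2 * t * \<alpha>)"
  defines "L \<equiv> real n + cosh (2 * t * \<beta>) / s * KR / 4"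
  shows "norm ((\<mu> / sinh (of_real (2 * t) * \<mu>)) ^ n) * norm (exp (- (\<mu> / 4) * ccoth (of_real (2 * t) * \<mu>) * of_real \<rho>))
           \<le> exp (L * (\<beta> + \<bar>Im \<mu>\<bar>)) / s ^ n"
proof -
  let ?w = "of_real (2 * t) * \<mu>"
  let ?r = "\<beta> + \<bar>Im \<mu>\<bar>"
  have \<beta>: "0 < \<beta>" and s: "0 < s"
    using \<alpha> x t by (auto simp: s_def)
  have norm_\<mu>: "norm \<mu> \<le> ?r"
    using cmod_le[of \<mu>] x \<alpha> by simp
  have "s \<le> sinh (Re ?w)"
    using t x by (simp add: s_def)
  then have sinh_w: "s \<le> norm (sinh ?w)"
    using sinh_Re_le_norm_sinh[of ?w] by linarith
  have coth_w: "norm (ccoth ?w) \<le> cosh (2 * t * \<beta>) / s"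
    unfolding s_def using t \<alpha> x by (intro norm_ccoth_le) auto
  have "norm ((\<mu> / sinh ?w) ^ n) \<le> (?r / s) ^ n"
    unfolding norm_power norm_divide using norm_\<mu> sinh_w s \<beta> by (intro power_mono frac_le) auto
  also have "\<dots> \<le> exp ?r ^ n / s ^ n"
    unfolding power_divide using s \<beta>
    by (intro divide_right_mono power_mono) (auto intro: order_trans[OF _ exp_ge_add_one_self])
  finally have sinh_factor: "norm ((\<mu> / sinh ?w) ^ n) \<le> exp (real n * ?r) / s ^ n"
    by (simp add: exp_of_nat_mult)
  have "Re (- (\<mu> / 4) * ccoth ?w * of_real \<rho>) \<le> norm \<mu> / 4 * norm (ccoth ?w) * \<rho>"
    using complex_Re_le_cmod[of "- (\<mu> / 4) * ccoth ?w * of_real \<rho>"] \<rho> by (simp add: norm_mult norm_divide)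
  also have "\<dots> \<le> ?r / 4 * (cosh (2 * t * \<beta>) / s) * KR"
    using norm_\<mu> coth_w \<rho> \<beta> s by (intro mult_mono divide_right_mono) auto
  finally have coth_factor: "norm (exp (- (\<mu> / 4) * ccoth ?w * of_real \<rho>)) \<le> exp (?r * (cosh (2 * t * \<beta>) / s) * KR / 4)"
    by (simp add: norm_exp_eq_Re mult_ac)
  have "norm ((\<mu> / sinh ?w) ^ n) * norm (exp (- (\<mu> / 4) * ccoth ?w * of_real \<rho>))
      \<le> exp (real n * ?r) / s ^ n * exp (?r * (cosh (2 * t * \<beta>) / s) * KR / 4)"
    using s by (intro mult_mono sinh_factor coth_factor) auto
  also have "\<dots> = exp (L * ?r) / s ^ n"
    by (simp add: L_def algebra_simps flip: exp_add)
  finally show ?thesis .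
qed

lemma norm_heat_profile_le:
  assumes t: "t > 0" and \<alpha>: "0 < \<alpha>"
  shows "\<exists>K L. 0 \<le> K \<and> (\<forall>a \<rho> \<mu>. \<bar>a\<bar> \<le> KA \<longrightarrow> 0 \<le> \<rho> \<longrightarrow> \<rho> \<le> KR \<longrightarrow> \<alpha> \<le> Re \<mu> \<longrightarrow> Re \<mu> \<le> \<beta> \<longrightarrow>
           norm (heat_profile n t a \<rho> \<mu>) \<le> K * exp (L * \<bar>Im \<mu>\<bar>) * exp (- 2 * t * (Im \<mu>)\<^sup>2))"
proof -
  define s where "s = sinh (2 * t * \<alpha>)"
  define L where "L = real n + cosh (2 * t * \<beta>) / s * KR / 4"
  define C where "C = exp (2 * t * \<beta>\<^sup>2) * 4 ^ n * exp (\<beta> * KA) * inverse ((4 * pi) ^ n) / s ^ n"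
  show ?thesis
  proof (rule exI[of _ "C * exp (L * \<beta>)"], rule exI[of _ L], intro conjI allI impI)
    show "0 \<le> C * exp (L * \<beta>)"
      unfolding C_def s_def using t \<alpha> by (intro mult_nonneg_nonneg divide_nonneg_nonneg) auto
    fix a \<rho> :: real and \<mu> :: complex
    assume a: "\<bar>a\<bar> \<le> KA" and \<rho>: "0 \<le> \<rho>" "\<rho> \<le> KR" and x: "\<alpha> \<le> Re \<mu>" "Re \<mu> \<le> \<beta>"
    define y where "y = Im \<mu>"
    let ?w = "of_real (2 * t) * \<mu>"
    have "norm (exp (2 * of_real t * \<mu>\<^sup>2)) = exp (2 * t * (Re \<mu>)\<^sup>2 + - 2 * t * y\<^sup>2)"
      by (simp add: norm_exp_eq_Re y_def power2_eq_square algebra_simps)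
    also have "\<dots> \<le> exp (2 * t * \<beta>\<^sup>2 + - 2 * t * y\<^sup>2)"
      using x \<alpha> t by (simp add: power_mono)
    finally have gauss_factor: "norm (exp (2 * of_real t * \<mu>\<^sup>2)) \<le> exp (2 * t * \<beta>\<^sup>2) * exp (- 2 * t * y\<^sup>2)"
      by (simp only: exp_add)
    have "Re \<mu> * a \<le> Re \<mu> * \<bar>a\<bar>"
      using x \<alpha> by (intro mult_left_mono) auto
    also have "\<dots> \<le> \<beta> * KA"
      using x \<alpha> a by (intro mult_mono) auto
    finally have phase_factor: "norm (exp (\<mu> * of_real a)) \<le> exp (\<beta> * KA)"
      by (simp add: norm_exp_eq_Re)
    have "norm (heat_profile n t a \<rho> \<mu>) = norm (exp (2 * of_real t * \<mu>\<^sup>2)) *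
        (4 ^ n * norm (exp (\<mu> * of_real a)) * (inverse ((4 * pi) ^ n) * (norm ((\<mu> / sinh ?w) ^ n) *
         norm (exp (- (\<mu> / 4) * ccoth ?w * of_real \<rho>)))))"
      unfolding heat_profile_def by (simp add: norm_mult norm_inverse norm_power)
    also have "\<dots> \<le> (exp (2 * t * \<beta>\<^sup>2) * exp (- 2 * t * y\<^sup>2)) *
        (4 ^ n * exp (\<beta> * KA) * (inverse ((4 * pi) ^ n) * (exp (L * (\<beta> + \<bar>y\<bar>)) / s ^ n)))"
      using norm_heat_profile_hyperbolic_factor_le[OF t \<alpha> x \<rho>, of n]
      by (intro mult_mono gauss_factor phase_factor mult_nonneg_nonneg) (auto simp: L_def s_def y_def)
    also have "\<dots> = C * exp (L * \<beta>) * exp (L * \<bar>y\<bar>) * exp (- 2 * t * y\<^sup>2)"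
      by (simp only: C_def distrib_left exp_add divide_inverse mult_ac)
    finally show "norm (heat_profile n t a \<rho> \<mu>) \<le> C * exp (L * \<beta>) * exp (L * \<bar>Im \<mu>\<bar>) * exp (- 2 * t * (Im \<mu>)\<^sup>2)"
      by (simp add: y_def)
  qed
qed

lemma heat_profile_gaussian_bound:
  assumes t: "t > 0" and \<alpha>: "0 < \<alpha>"
  shows "\<exists>K\<ge>0. \<forall>a \<rho> \<mu>. \<bar>a\<bar> \<le> KA \<longrightarrow> 0 \<le> \<rho> \<longrightarrow> \<rho> \<le> KR \<longrightarrow> \<alpha> \<le> Re \<mu> \<longrightarrow> Re \<mu> \<le> \<beta> \<longrightarrow>
           norm (heat_profile n t a \<rho> \<mu>) \<le> K * exp (- t * (Im \<mu>)\<^sup>2)"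
proof -
  obtain K L where K: "0 \<le> K" and bound: "\<And>a \<rho> \<mu>. \<bar>a\<bar> \<le> KA \<Longrightarrow> 0 \<le> \<rho> \<Longrightarrow> \<rho> \<le> KR \<Longrightarrow> \<alpha> \<le> Re \<mu> \<Longrightarrow>
      Re \<mu> \<le> \<beta> \<Longrightarrow> norm (heat_profile n t a \<rho> \<mu>) \<le> K * exp (L * \<bar>Im \<mu>\<bar>) * exp (- 2 * t * (Im \<mu>)\<^sup>2)"
    using norm_heat_profile_le[OF t \<alpha>] by blast
  have absorb: "K * exp (L * \<bar>y\<bar>) * exp (- 2 * t * y\<^sup>2) \<le> K * exp (L\<^sup>2 / (4 * t)) * exp (- t * y\<^sup>2)" for y
  proof -
    have "0 \<le> (2 * t * \<bar>y\<bar> - L)\<^sup>2" by simp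
    then have "L * \<bar>y\<bar> - 2 * t * y\<^sup>2 \<le> L\<^sup>2 / (4 * t) - t * y\<^sup>2"
      using t by (simp add: field_simps power2_eq_square)
    then show ?thesis
      using K by (simp add: mult.assoc mult_left_mono flip: exp_add)
  qed
  show ?thesis
  proof (intro exI[of _ "K * exp (L\<^sup>2 / (4 * t))"] conjI allI impI)
    show "0 \<le> K * exp (L\<^sup>2 / (4 * t))"
      using K by simp
    fix a \<rho> \<mu> assume "\<bar>a\<bar> \<le> KA" "0 \<le> \<rho>" "\<rho> \<le> KR" "\<alpha> \<le> Re \<mu>" "Re \<mu> \<le> \<beta>"
    then show "norm (heat_profile n t a \<rho> \<mu>) \<le> K * exp (L\<^sup>2 / (4 * t)) * exp (- t * (Im \<mu>)\<^sup>2)"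
      by (rule order_trans[OF bound absorb])
  qed
qed

lemma continuous_on_heat_profile_line:
  assumes "t > 0" "l > 0"
  shows "continuous_on UNIV (\<lambda>u. heat_profile n t a \<rho> (Complex l u))"
proof -
  have "continuous_on {\<mu>. 0 < Re \<mu>} (heat_profile n t a \<rho>)"
    using heat_profile_holomorphic[OF assms(1)] holomorphic_on_imp_continuous_on by blast
  then show ?thesis
    using assms(2)
    by (intro continuous_on_compose2[OF _ continuous_on_Complex[OF continuous_on_const continuous_on_id]]) auto
qed

lemma heat_profile_line_gaussian_bound:
  assumes t: "t > 0" and l: "l > 0" and "0 \<le> \<rho>"
  obtains K where "K \<ge> 0" "\<And>u. norm (heat_profile n t a \<rho> (Complex l u)) \<le> K * exp (- t * u\<^sup>2)"
proof -
  obtain K where "K \<ge> 0" and K: "\<And>a' \<rho>' \<mu>. \<bar>a'\<bar> \<le> \<bar>a\<bar> \<Longrightarrow> 0 \<le> \<rho>' \<Longrightarrow> \<rho>' \<le> \<rho> \<Longrightarrow>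
      l \<le> Re \<mu> \<Longrightarrow> Re \<mu> \<le> l \<Longrightarrow> norm (heat_profile n t a' \<rho>' \<mu>) \<le> K * exp (- t * (Im \<mu>)\<^sup>2)"
    using heat_profile_gaussian_bound[OF t l] by blast
  have "norm (heat_profile n t a \<rho> (Complex l u)) \<le> K * exp (- t * (Im (Complex l u))\<^sup>2)" for u
    by (rule K) (simp_all add: \<open>0 \<le> \<rho>\<close>)
  then show ?thesis
    using that \<open>K \<ge> 0\<close> by simp
qed

section \<open>The integrals \<open>I\<^sub>\<lambda>\<close> and \<open>W\<^sub>t\<^sup>+\<close>\<close>

definition Ilam_integrand :: "real \<Rightarrow> complex^'n \<Rightarrow> complex^'n \<Rightarrow> real \<Rightarrow> complex \<Rightarrow> complex" where
  "Ilam_integrand t z w \<eta> \<mu> =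
     heat_profile CARD('n) t (kernel_phase z w) (kernel_radius z w) \<mu> * exp (- 2 * of_real \<eta> * \<mu>)"

lemma Ilam_eq_line_integral:
  "Ilam t lam z w \<zeta> = of_real (inverse pi) * (\<integral>u. Ilam_integrand t z w (Im \<zeta>) (Complex lam u) \<partial>lborel)"
proof -
  let ?F = "\<lambda>u. Ilam_integrand t z w (Im \<zeta>) (Complex lam u)"
  have "Ilam t lam z w \<zeta> = of_real (inverse (2 * pi)) * (\<integral>s. ?F (s / 2) \<partial>lborel)"
  proof -
    have "of_real lam + \<i> * of_real (s / 2) = Complex lam (s / 2)" for s
      by (simp add: complex_eq_iff)
    then show ?thesis
      unfolding Ilam_def Ilam_integrand_def Let_def exp_mult_Wt_eq_heat_profile[symmetric]
      by (simp add: mult_ac)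
  qed
  also have "(\<integral>s. ?F (s / 2) \<partial>lborel) = 2 *\<^sub>R (\<integral>u. ?F ((0 + 2 * u) / 2) \<partial>lborel)"
    by (subst lborel_integral_real_affine[where c = 2 and t = 0]) simp_all
  finally show ?thesis
    by (simp add: scaleR_conv_of_real)
qed

lemma Ilam_integrand_holomorphic:
  "t > 0 \<Longrightarrow> Ilam_integrand t z w \<eta> holomorphic_on {\<mu>. 0 < Re \<mu>}"
  unfolding Ilam_integrand_def by (intro holomorphic_intros heat_profile_holomorphic)

lemma Ilam_integrand_gaussian_bound:
  assumes t: "t > 0" and \<alpha>: "0 < \<alpha>"
  shows "\<exists>K\<ge>0. \<forall>(z::complex^'n) w \<eta> \<mu>. \<bar>kernel_phase z w\<bar> \<le> KA \<longrightarrow> kernel_radius z w \<le> KR \<longrightarrow>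
           \<alpha> \<le> Re \<mu> \<longrightarrow> Re \<mu> \<le> \<beta> \<longrightarrow>
           norm (Ilam_integrand t z w \<eta> \<mu>) \<le> K * exp (- 2 * \<eta> * Re \<mu>) * exp (- t * (Im \<mu>)\<^sup>2)"
proof -
  obtain K where K: "K \<ge> 0" and bound: "\<And>a \<rho> \<mu>. \<bar>a\<bar> \<le> KA \<Longrightarrow> 0 \<le> \<rho> \<Longrightarrow> \<rho> \<le> KR \<Longrightarrow> \<alpha> \<le> Re \<mu> \<Longrightarrow>
      Re \<mu> \<le> \<beta> \<Longrightarrow> norm (heat_profile CARD('n) t a \<rho> \<mu>) \<le> K * exp (- t * (Im \<mu>)\<^sup>2)"
    using heat_profile_gaussian_bound[OF t \<alpha>] by blast
  show ?thesis
  proof (intro exI[of _ K] conjI K allI impI)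
    fix z w :: "complex^'n" and \<eta> \<mu>
    assume "\<bar>kernel_phase z w\<bar> \<le> KA" "kernel_radius z w \<le> KR" "\<alpha> \<le> Re \<mu>" "Re \<mu> \<le> \<beta>"
    then have "norm (heat_profile CARD('n) t (kernel_phase z w) (kernel_radius z w) \<mu>) * exp (- 2 * \<eta> * Re \<mu>)
        \<le> K * exp (- t * (Im \<mu>)\<^sup>2) * exp (- 2 * \<eta> * Re \<mu>)"
      by (intro mult_right_mono bound kernel_radius_nonneg) simp_all
    then show "norm (Ilam_integrand t z w \<eta> \<mu>) \<le> K * exp (- 2 * \<eta> * Re \<mu>) * exp (- t * (Im \<mu>)\<^sup>2)"
      by (simp add: Ilam_integrand_def norm_mult norm_exp_eq_Re mult_ac)
  qed
qed

lemma Ilam_integrand_line_bound: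
  assumes t: "t > 0" and \<alpha>: "0 < \<alpha>"
  obtains C where "\<And>\<mu>. \<alpha> \<le> Re \<mu> \<Longrightarrow> Re \<mu> \<le> \<beta> \<Longrightarrow>
    norm (Ilam_integrand t z w \<eta> \<mu>) \<le> C * exp (- t * (Im \<mu>)\<^sup>2)"
proof -
  obtain K where K: "K \<ge> 0" and bound: "\<And>\<mu>. \<alpha> \<le> Re \<mu> \<Longrightarrow> Re \<mu> \<le> \<beta> \<Longrightarrow>
      norm (Ilam_integrand t z w \<eta> \<mu>) \<le> K * exp (- 2 * \<eta> * Re \<mu>) * exp (- t * (Im \<mu>)\<^sup>2)"
    using Ilam_integrand_gaussian_bound[OF t \<alpha>, of "\<bar>kernel_phase z w\<bar>" "kernel_radius z w" \<beta>] by blast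
  show ?thesis
  proof (rule that)
    fix \<mu> assume h: "\<alpha> \<le> Re \<mu>" "Re \<mu> \<le> \<beta>"
    have "- 2 * \<eta> * Re \<mu> \<le> 2 * \<bar>\<eta>\<bar> * Re \<mu>"
      using h \<alpha> by (intro mult_right_mono) auto
    also have "\<dots> \<le> 2 * \<bar>\<eta>\<bar> * \<beta>"
      using h by (intro mult_left_mono) auto
    finally have "K * exp (- 2 * \<eta> * Re \<mu>) * exp (- t * (Im \<mu>)\<^sup>2) \<le> K * exp (2 * \<bar>\<eta>\<bar> * \<beta>) * exp (- t * (Im \<mu>)\<^sup>2)"
      using K by (intro mult_right_mono mult_left_mono) auto
    then show "norm (Ilam_integrand t z w \<eta> \<mu>) \<le> K * exp (2 * \<bar>\<eta>\<bar> * \<beta>) * exp (- t * (Im \<mu>)\<^sup>2)"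
      using bound[OF h] by linarith
  qed
qed

lemma Ilam_integrand_line_integrable:
  assumes t: "t > 0" and l: "l > 0"
  shows "integrable lborel (\<lambda>u. Ilam_integrand t z w \<eta> (Complex l u))"
proof -
  obtain C where C: "\<And>\<mu>. l \<le> Re \<mu> \<Longrightarrow> Re \<mu> \<le> l \<Longrightarrow> norm (Ilam_integrand t z w \<eta> \<mu>) \<le> C * exp (- t * (Im \<mu>)\<^sup>2)"
    using Ilam_integrand_line_bound[OF t l] by blast
  have "continuous_on {\<mu>. 0 < Re \<mu>} (Ilam_integrand t z w \<eta>)"
    using Ilam_integrand_holomorphic[OF t] holomorphic_on_imp_continuous_on by blast
  then have "continuous_on UNIV (\<lambda>u. Ilam_integrand t z w \<eta> (Complex l u))"
    using l by (intro continuous_on_compose2[OF _ continuous_on_Complex[OF continuous_on_const continuous_on_id]]) auto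
  then show ?thesis
    using C[of "Complex l _"] by (intro integrable_gaussian_dominated[OF _ t]) auto
qed

lemma Ilam_independent_of_lambda:
  assumes t: "t > 0" and l: "0 < l1" "0 < l2"
  shows "Ilam t l1 z w \<zeta> = Ilam t l2 z w \<zeta>"
proof -
  let ?F = "Ilam_integrand t z w (Im \<zeta>)"
  have shift: "(\<integral>u. ?F (Complex a u) \<partial>lborel) = (\<integral>u. ?F (Complex b u) \<partial>lborel)"
    if ab: "0 < a" "a \<le> b" for a b
  proof -
    obtain C where C: "\<And>\<mu>. a \<le> Re \<mu> \<Longrightarrow> Re \<mu> \<le> b \<Longrightarrow> norm (?F \<mu>) \<le> C * exp (- t * (Im \<mu>)\<^sup>2)"
      using Ilam_integrand_line_bound[OF t ab(1)] by blast
    have "{\<mu>. a \<le> Re \<mu> \<and> Re \<mu> \<le> b} \<subseteq> {\<mu>. 0 < Re \<mu>}"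
      using ab by auto
    then show ?thesis
      by (rule integral_vertical_line_shift[OF Ilam_integrand_holomorphic[OF t] convex_halfspace_Re_gt _ ab(2) t C])
  qed
  show ?thesis
  proof (cases "l1 \<le> l2")
    case True
    then show ?thesis using shift[OF l(1) True] by (simp add: Ilam_eq_line_integral)
  next
    case False
    then show ?thesis using shift[OF l(2), of l1] by (simp add: Ilam_eq_line_integral)
  qed
qed

lemma Wplus_eq_Ilam: "t > 0 \<Longrightarrow> l > 0 \<Longrightarrow> Wplus t z w \<zeta> = Ilam t l z w \<zeta>"
  unfolding Wplus_def by (rule Ilam_independent_of_lambda) auto

lemma Ilam_uniform_bound:
  assumes t: "t > 0" and \<alpha>: "0 < \<alpha>"
  shows "\<exists>M\<ge>0. \<forall>(z::complex^'n) w \<zeta> lam. \<bar>kernel_phase z w\<bar> \<le> KA \<longrightarrow> kernel_radius z w \<le> KR \<longrightarrow>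
           \<alpha> \<le> lam \<longrightarrow> lam \<le> \<beta> \<longrightarrow> norm (Ilam t lam z w \<zeta>) \<le> M * exp (- 2 * Im \<zeta> * lam)"
proof -
  obtain K where K: "K \<ge> 0" and bound: "\<And>(z::complex^'n) w \<eta> \<mu>. \<bar>kernel_phase z w\<bar> \<le> KA \<Longrightarrow>
      kernel_radius z w \<le> KR \<Longrightarrow> \<alpha> \<le> Re \<mu> \<Longrightarrow> Re \<mu> \<le> \<beta> \<Longrightarrow>
      norm (Ilam_integrand t z w \<eta> \<mu>) \<le> K * exp (- 2 * \<eta> * Re \<mu>) * exp (- t * (Im \<mu>)\<^sup>2)"
    using Ilam_integrand_gaussian_bound[OF t \<alpha>] by blast
  define G where "G = (\<integral>u. exp (- t * u\<^sup>2) \<partial>lborel)"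
  have G: "0 \<le> G"
    unfolding G_def by (rule Bochner_Integration.integral_nonneg) simp
  show ?thesis
  proof (intro exI[of _ "inverse pi * K * G"] conjI allI impI)
    show "0 \<le> inverse pi * K * G"
      using K G by simp
    fix z w :: "complex^'n" and \<zeta> lam
    assume h: "\<bar>kernel_phase z w\<bar> \<le> KA" "kernel_radius z w \<le> KR" "\<alpha> \<le> lam" "lam \<le> \<beta>"
    have "(\<integral>u. norm (Ilam_integrand t z w (Im \<zeta>) (Complex lam u)) \<partial>lborel)
        \<le> (\<integral>u. K * exp (- 2 * Im \<zeta> * lam) * exp (- t * u\<^sup>2) \<partial>lborel)"
    proof (rule integral_mono)
      show "integrable lborel (\<lambda>u. norm (Ilam_integrand t z w (Im \<zeta>) (Complex lam u)))"
        using h \<alpha> by (intro integrable_norm Ilam_integrand_line_integrable[OF t]) auto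
      show "integrable lborel (\<lambda>u. K * exp (- 2 * Im \<zeta> * lam) * exp (- t * u\<^sup>2))"
        using integrable_exp_neg_square[OF t] by simp
      show "norm (Ilam_integrand t z w (Im \<zeta>) (Complex lam u)) \<le> K * exp (- 2 * Im \<zeta> * lam) * exp (- t * u\<^sup>2)" for u
        using bound[of z w "Complex lam u"] h by simp
    qed
    also have "\<dots> = K * exp (- 2 * Im \<zeta> * lam) * G"
      by (simp add: G_def)
    finally have "norm (\<integral>u. Ilam_integrand t z w (Im \<zeta>) (Complex lam u) \<partial>lborel) \<le> K * exp (- 2 * Im \<zeta> * lam) * G"
      by (rule order_trans[OF integral_norm_bound])
    then have "inverse pi * norm (\<integral>u. Ilam_integrand t z w (Im \<zeta>) (Complex lam u) \<partial>lborel)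
        \<le> inverse pi * (K * exp (- 2 * Im \<zeta> * lam) * G)"
      by (rule mult_left_mono) simp
    then show "norm (Ilam t lam z w \<zeta>) \<le> inverse pi * K * G * exp (- 2 * Im \<zeta> * lam)"
      by (simp add: Ilam_eq_line_integral norm_mult norm_inverse mult_ac)
  qed
qed

lemma Wplus_exp_weighted_bound:
  assumes t: "t > 0" and \<alpha>: "0 < \<alpha>"
  shows "\<exists>M\<ge>0. \<forall>(z::complex^'n) w \<zeta> \<epsilon>. \<bar>kernel_phase z w\<bar> \<le> KA \<longrightarrow> kernel_radius z w \<le> KR \<longrightarrow>
           \<alpha> \<le> \<epsilon> \<longrightarrow> \<epsilon> \<le> \<beta> \<longrightarrow> exp (2 * \<epsilon> * Im \<zeta>) * norm (Wplus t z w \<zeta>) \<le> M * exp (- \<alpha> * \<bar>Im \<zeta>\<bar>)"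
proof -
  obtain M where M: "M \<ge> 0" and bound: "\<And>(z::complex^'n) w \<zeta> lam. \<bar>kernel_phase z w\<bar> \<le> KA \<Longrightarrow>
      kernel_radius z w \<le> KR \<Longrightarrow> \<alpha> / 2 \<le> lam \<Longrightarrow> lam \<le> 2 * \<beta> \<Longrightarrow>
      norm (Ilam t lam z w \<zeta>) \<le> M * exp (- 2 * Im \<zeta> * lam)"
    using Ilam_uniform_bound[OF t half_gt_zero[OF \<alpha>]] by blast
  show ?thesis
  proof (intro exI[of _ M] conjI M allI impI)
    fix z w :: "complex^'n" and \<zeta> \<epsilon>
    assume zw: "\<bar>kernel_phase z w\<bar> \<le> KA" "kernel_radius z w \<le> KR" and \<epsilon>: "\<alpha> \<le> \<epsilon>" "\<epsilon> \<le> \<beta>"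
    define \<eta> where "\<eta> = Im \<zeta>"
    obtain lam where lam: "\<alpha> / 2 \<le> lam" "lam \<le> 2 * \<beta>"
      and decay: "2 * \<epsilon> * \<eta> + - 2 * \<eta> * lam \<le> - \<alpha> * \<bar>\<eta>\<bar>"
    proof (cases "\<eta> \<ge> 0")
      case True
      have "\<alpha> * \<eta> \<le> 2 * \<epsilon> * \<eta>"
        using True \<epsilon> \<alpha> by (intro mult_right_mono) auto
      then show ?thesis
        using True \<epsilon> \<alpha> by (intro that[of "2 * \<epsilon>"]) auto
    next
      case False
      have "\<epsilon> * \<eta> \<le> \<alpha> * \<eta>"
        using False \<epsilon> by (intro mult_right_mono_neg) auto
      then show ?thesis
        using False \<epsilon> \<alpha> by (intro that[of "\<epsilon> / 2"]) auto
    qed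
    have "exp (2 * \<epsilon> * \<eta>) * norm (Wplus t z w \<zeta>) = exp (2 * \<epsilon> * \<eta>) * norm (Ilam t lam z w \<zeta>)"
      using lam \<alpha> by (simp add: Wplus_eq_Ilam[OF t, of lam])
    also have "\<dots> \<le> exp (2 * \<epsilon> * \<eta>) * (M * exp (- 2 * \<eta> * lam))"
      using bound[OF zw lam] by (simp add: \<eta>_def)
    also have "\<dots> = M * exp (2 * \<epsilon> * \<eta> + - 2 * \<eta> * lam)"
      by (simp only: exp_add mult_ac)
    also have "\<dots> \<le> M * exp (- \<alpha> * \<bar>\<eta>\<bar>)"
      using decay M by (intro mult_left_mono) auto
    finally show "exp (2 * \<epsilon> * Im \<zeta>) * norm (Wplus t z w \<zeta>) \<le> M * exp (- \<alpha> * \<bar>Im \<zeta>\<bar>)"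
      by (simp add: \<eta>_def)
  qed
qed

lemma Wplus_weighted_nn_integral_bound:
  fixes Q :: "((complex^'n) \<times> (complex^'n)) set"
  assumes t: "t > 0" and a: "a > 0" and Q: "compact Q"
  shows "\<exists>C. C > 0 \<and> (\<forall>\<epsilon>\<in>{inverse a..a}. \<forall>\<xi>. \<forall>(z, w)\<in>Q.
           (\<integral>\<^sup>+ \<eta>. ennreal (norm (exp (of_real (2 * \<epsilon> * \<eta>)) * Wplus t z w (Complex \<xi> \<eta>))) \<partial>lborel)
             \<le> ennreal C)"
proof -
  obtain B where B: "\<And>p. p \<in> Q \<Longrightarrow> norm p \<le> B"
    using compact_imp_bounded[OF Q] bounded_iff by blast
  have zw: "norm z \<le> B" "norm w \<le> B" if "(z, w) \<in> Q" for z w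
    using B[OF that] norm_fst_le[of z w] norm_snd_le[of w z] by auto
  obtain M where M: "M \<ge> 0" and bound: "\<And>(z::complex^'n) w \<zeta> \<epsilon>. \<bar>kernel_phase z w\<bar> \<le> 2 * B\<^sup>2 \<Longrightarrow>
      kernel_radius z w \<le> 8 * B\<^sup>2 \<Longrightarrow> inverse a \<le> \<epsilon> \<Longrightarrow> \<epsilon> \<le> a \<Longrightarrow>
      exp (2 * \<epsilon> * Im \<zeta>) * norm (Wplus t z w \<zeta>) \<le> M * exp (- inverse a * \<bar>Im \<zeta>\<bar>)"
    using Wplus_exp_weighted_bound[OF t positive_imp_inverse_positive[OF a]] by blast
  define g where "g \<eta> = M * exp (- inverse a * \<bar>\<eta>\<bar>)" for \<eta> :: real
  have g: "integrable lborel g" "\<And>\<eta>. 0 \<le> g \<eta>"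
    unfolding g_def[abs_def] using integrable_exp_neg_abs[of "inverse a"] a M by simp_all
  show ?thesis
  proof (intro exI[of _ "integral\<^sup>L lborel g + 1"] conjI ballI allI)
    show "0 < integral\<^sup>L lborel g + 1"
      using Bochner_Integration.integral_nonneg[of lborel g, OF g(2)] by simp
    fix \<epsilon> \<xi> and p assume \<epsilon>: "\<epsilon> \<in> {inverse a..a}" and "p \<in> Q"
    then obtain z w where p: "p = (z, w)" "(z, w) \<in> Q" by (cases p) auto
    have "norm (exp (of_real (2 * \<epsilon> * \<eta>)) * Wplus t z w (Complex \<xi> \<eta>)) \<le> g \<eta>" for \<eta>
      using bound[OF abs_kernel_phase_le[OF zw[OF p(2)]] kernel_radius_le[OF zw[OF p(2)]], of \<epsilon> "Complex \<xi> \<eta>"] \<epsilon>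
      by (simp add: norm_mult g_def)
    then have "(\<integral>\<^sup>+ \<eta>. ennreal (norm (exp (of_real (2 * \<epsilon> * \<eta>)) * Wplus t z w (Complex \<xi> \<eta>))) \<partial>lborel)
        \<le> (\<integral>\<^sup>+ \<eta>. ennreal (g \<eta>) \<partial>lborel)"
      by (intro nn_integral_mono ennreal_leI)
    also have "\<dots> = ennreal (integral\<^sup>L lborel g)"
      using g by (intro nn_integral_eq_integral) auto
    also have "\<dots> \<le> ennreal (integral\<^sup>L lborel g + 1)"
      by (intro ennreal_leI) simp
    finally show "case p of (z, w) \<Rightarrow>
        (\<integral>\<^sup>+ \<eta>. ennreal (norm (exp (of_real (2 * \<epsilon> * \<eta>)) * Wplus t z w (Complex \<xi> \<eta>))) \<partial>lborel)
          \<le> ennreal (integral\<^sup>L lborel g + 1)"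
      by (simp add: p)
  qed
qed

section \<open>Inversion formula and symmetries\<close>

lemma fourier_transform_heat_profile_line:
  fixes z w :: "complex^'n"
  assumes t: "t > 0" and l: "l > 0"
  shows "fourier_transform (\<lambda>u. heat_profile CARD('n) t (kernel_phase z w) (kernel_radius z w) (Complex l u)) (2 * \<eta>)
       = of_real pi * (exp (of_real (2 * \<eta> * l)) * Wplus t z w (\<i> * of_real \<eta>))"
proof -
  have "of_real (2 * \<eta> * l) + - 2 * of_real \<eta> * Complex l u = - (\<i> * of_real (2 * \<eta> * u))" for u
    by (simp add: complex_eq_iff)
  then have "heat_profile CARD('n) t (kernel_phase z w) (kernel_radius z w) (Complex l u) * exp (- (\<i> * of_real (2 * \<eta> * u)))
      = exp (of_real (2 * \<eta> * l)) * Ilam_integrand t z w \<eta> (Complex l u)" for u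
    by (simp add: Ilam_integrand_def mult.left_commute flip: exp_add)
  then show ?thesis
    by (simp add: fourier_transform_def Wplus_eq_Ilam[OF t l] Ilam_eq_line_integral)
qed

lemma integrable_fourier_transform_heat_profile_line:
  fixes z w :: "complex^'n"
  assumes t: "t > 0" and l: "l > 0"
  shows "integrable lborel
           (fourier_transform (\<lambda>u. heat_profile CARD('n) t (kernel_phase z w) (kernel_radius z w) (Complex l u)))"
    (is "integrable lborel (fourier_transform ?G)")
proof -
  obtain M where "M \<ge> 0" and M: "\<And>(z'::complex^'n) w' \<zeta> \<epsilon>. \<bar>kernel_phase z' w'\<bar> \<le> \<bar>kernel_phase z w\<bar> \<Longrightarrow>
      kernel_radius z' w' \<le> kernel_radius z w \<Longrightarrow> l \<le> \<epsilon> \<Longrightarrow> \<epsilon> \<le> l \<Longrightarrow>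
      exp (2 * \<epsilon> * Im \<zeta>) * norm (Wplus t z' w' \<zeta>) \<le> M * exp (- l * \<bar>Im \<zeta>\<bar>)"
    using Wplus_exp_weighted_bound[OF t l] by blast
  have bound: "norm (fourier_transform ?G x) \<le> pi * M * exp (- (l / 2) * \<bar>x\<bar>)" for x
  proof -
    define \<eta> where "\<eta> = x / 2"
    have "norm (fourier_transform ?G x) = pi * (exp (2 * l * Im (\<i> * of_real \<eta>)) * norm (Wplus t z w (\<i> * of_real \<eta>)))"
      using fourier_transform_heat_profile_line[OF t l, of z w \<eta>] by (simp add: \<eta>_def norm_mult mult_ac)
    also have "\<dots> \<le> pi * (M * exp (- l * \<bar>Im (\<i> * of_real \<eta>)\<bar>))"
      using M[of z w l "\<i> * of_real \<eta>"] by (intro mult_left_mono) auto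
    also have "\<dots> = pi * M * exp (- (l / 2) * \<bar>x\<bar>)"
      by (simp add: \<eta>_def abs_divide)
    finally show ?thesis .
  qed
  have [measurable]: "?G \<in> borel_measurable borel"
    using continuous_on_heat_profile_line[OF t l] by (simp add: borel_measurable_continuous_onI)
  show ?thesis
  proof (rule Bochner_Integration.integrable_bound)
    show "integrable lborel (\<lambda>x. pi * M * exp (- (l / 2) * \<bar>x\<bar>))"
      using integrable_exp_neg_abs[of "l / 2"] l by simp
    show "fourier_transform ?G \<in> borel_measurable lborel"
      unfolding fourier_transform_def[abs_def] by measurable
    show "AE x in lborel. norm (fourier_transform ?G x) \<le> norm (pi * M * exp (- (l / 2) * \<bar>x\<bar>))"
      using bound \<open>M \<ge> 0\<close> by (intro AE_I2) (simp add: abs_mult)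
  qed
qed

lemma Wt_eq_integral_Wplus:
  fixes z w :: "complex^'n"
  assumes t: "t > 0" and l: "l > 0"
  shows "Wt t (of_real l) z w = of_real (exp (- 2 * t * l\<^sup>2)) *
           (\<integral>\<eta>. exp (of_real (2 * \<eta> * l)) * Wplus t z w (\<i> * of_real \<eta>) \<partial>lborel)"
proof -
  define G where "G u = heat_profile CARD('n) t (kernel_phase z w) (kernel_radius z w) (Complex l u)" for u
  have G_cont: "continuous_on UNIV G"
    unfolding G_def[abs_def] by (rule continuous_on_heat_profile_line[OF t l])
  obtain K where "K \<ge> 0" and G_gauss: "\<And>u. norm (G u) \<le> K * exp (- t * u\<^sup>2)"
    unfolding G_def using heat_profile_line_gaussian_bound[OF t l kernel_radius_nonneg] by blast
  have "norm (G u) \<le> K" for u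
    using G_gauss[of u] mult_left_mono[of "exp (- t * u\<^sup>2)" 1 K] \<open>K \<ge> 0\<close> t by fastforce
  moreover have "isCont G 0" "G \<in> borel_measurable borel"
    using G_cont by (simp_all add: continuous_on_eq_continuous_at borel_measurable_continuous_onI)
  moreover have "integrable lborel G"
    by (rule integrable_gaussian_dominated[OF G_cont t G_gauss])
  moreover have "integrable lborel (fourier_transform G)"
    unfolding G_def[abs_def] by (rule integrable_fourier_transform_heat_profile_line[OF t l])
  ultimately have "(\<integral>x. fourier_transform G x \<partial>lborel) = 2 * pi * G 0"
    by (intro fourier_inversion_at_zero)
  moreover have "(\<integral>x. fourier_transform G x \<partial>lborel) = 2 * (\<integral>\<eta>. fourier_transform G (2 * \<eta>) \<partial>lborel)"
    using lborel_integral_real_affine[of 2 "fourier_transform G" 0] by (simp add: scaleR_conv_of_real)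
  ultimately have "(\<integral>\<eta>. exp (of_real (2 * \<eta> * l)) * Wplus t z w (\<i> * of_real \<eta>) \<partial>lborel) = G 0"
    unfolding G_def[abs_def] by (simp add: fourier_transform_heat_profile_line[OF t l])
  also have "G 0 = exp (2 * of_real t * (of_real l)\<^sup>2) * Wt t (of_real l) z w"
    using exp_mult_Wt_eq_heat_profile[of t "of_real l" z w] by (simp add: G_def Complex_eq)
  also have "exp (2 * of_real t * (of_real l)\<^sup>2) = of_real (exp (2 * t * l\<^sup>2))"
    by (simp flip: exp_of_real)
  finally show ?thesis
    by (simp add: mult.assoc[symmetric] flip: of_real_mult exp_add)
qed

lemma Ilam_integrand_cnj: "Ilam_integrand t z w \<eta> (cnj \<mu>) = cnj (Ilam_integrand t z w \<eta> \<mu>)"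
  unfolding Ilam_integrand_def by (simp add: heat_profile_cnj exp_cnj)

lemma Ilam_real: "Ilam t lam z w \<zeta> \<in> \<real>"
proof -
  let ?F = "\<lambda>u. Ilam_integrand t z w (Im \<zeta>) (Complex lam u)"
  have cnj_line: "cnj (Complex lam u) = Complex lam (- u)" for u
    by (simp add: complex_eq_iff)
  have "cnj (\<integral>u. ?F u \<partial>lborel) = (\<integral>u. cnj (?F u) \<partial>lborel)"
    by simp
  also have "\<dots> = (\<integral>u. ?F (- u) \<partial>lborel)"
    by (simp only: Ilam_integrand_cnj[symmetric] cnj_line)
  also have "\<dots> = (\<integral>u. ?F u \<partial>lborel)"
    using lborel_integral_real_affine[of "-1" ?F 0] by simp
  finally show ?thesis
    by (simp add: Ilam_eq_line_integral Reals_cnj_iff)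
qed

lemma Im_heis_mult_center:
  "Im (of_real c + \<zeta> + (cdot (cvec b) z - cdot (cvec a) w) / 2) = Im \<zeta> + (b \<bullet> im_vec z - a \<bullet> im_vec w) / 2"
  by (simp add: cdot_def cvec_def im_vec_def inner_vec_def Im_sum)

lemma Wplus_left_invariant:
  "(case heis_mult (hreal a b c) g of (z, w, \<zeta>) \<Rightarrow> Wplus t z w \<zeta>) = (case g of (z, w, \<zeta>) \<Rightarrow> Wplus t z w \<zeta>)"
proof (cases g)
  case (fields z w \<zeta>)
  then show ?thesis
    by (simp only: heis_mult_def hreal_def prod.case Wplus_def Ilam_eq_line_integral Ilam_integrand_def
        kernel_phase_translate kernel_radius_translate Im_heis_mult_center heat_profile_phase_shift_compensation)
qed

theorem proposition6p3:
  fixes t :: real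
  assumes "t > 0"
  shows
   "(\<forall>(z::complex^'n) w \<zeta>.
       (\<forall>l1 l2. l1 > 0 \<longrightarrow> l2 > 0 \<longrightarrow> Ilam t l1 z w \<zeta> = Ilam t l2 z w \<zeta>)
     \<and> (\<forall>l>0. Wplus t z w \<zeta> = Ilam t l z w \<zeta>)
     \<and> ((\<lambda>l. Ilam t l z w \<zeta>) \<longlongrightarrow> Wplus t z w \<zeta>) (at_right 0))
  \<and> (\<forall>a::real. a > 0 \<longrightarrow> (\<forall>Q::((complex^'n) \<times> (complex^'n)) set. compact Q \<longrightarrow>
       (\<exists>C::real. C > 0 \<and> (\<forall>\<epsilon>\<in>{inverse a..a}. \<forall>\<xi>::real. \<forall>(z, w)\<in>Q.
          (\<integral>\<^sup>+ \<eta>. ennreal (norm (exp (complex_of_real (2 * \<epsilon> * \<eta>)) * Wplus t z w (Complex \<xi> \<eta>))) \<partial>lborel)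
            \<le> ennreal C))))
  \<and> (\<forall>(z::complex^'n) w. \<forall>l::real. l > 0 \<longrightarrow>
       Wt t (complex_of_real l) z w =
         complex_of_real (exp (- 2 * t * l^2)) *
         integral\<^sup>L lborel (\<lambda>\<eta>::real. exp (complex_of_real (2 * \<eta> * l)) * Wplus t z w (\<i> * complex_of_real \<eta>)))
  \<and> (\<forall>(z::complex^'n) w \<zeta>. Wplus t z w \<zeta> \<in> \<real>)
  \<and> (\<forall>(a::real^'n) b c (g::(complex^'n) \<times> (complex^'n) \<times> complex).
       (case heis_mult (hreal a b c) g of (z, w, \<zeta>) \<Rightarrow> Wplus t z w \<zeta>)
       = (case g of (z, w, \<zeta>) \<Rightarrow> Wplus t z w \<zeta>))"
proof -
  have lambda_limit: "((\<lambda>l. Ilam t l z w \<zeta>) \<longlongrightarrow> Wplus t z w \<zeta>) (at_right 0)"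
    for z w :: "complex^'n" and \<zeta>
  proof (rule tendsto_eventually)
    show "\<forall>\<^sub>F l in at_right 0. Ilam t l z w \<zeta> = Wplus t z w \<zeta>"
      using eventually_at_right_less[of "0::real"] by eventually_elim (simp add: Wplus_eq_Ilam[OF assms])
  qed
  show ?thesis
    apply (intro conjI)
    subgoal using Ilam_independent_of_lambda[OF assms] Wplus_eq_Ilam[OF assms] lambda_limit by blast
    subgoal using Wplus_weighted_nn_integral_bound[OF assms] by blast
    subgoal using Wt_eq_integral_Wplus[OF assms] by blast
    subgoal using Ilam_real[of t 1, folded Wplus_def] by blast
    subgoal using Wplus_left_invariant by blast
    done
qed

end
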